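(* Let $X,Y$ be real Banach spaces such that $X\widehat{\otimes}_\pi Y$ has the strong diameter two property and the norm of $X^*$ is non-rough. Then $Y$ has the strong diameter two property.
   Context: A Banach space has the strong diameter two property (SD2P) if every convex combination $\sum_{i=1}^n\lambda_iS_i$ ($\lambda_i\ge0$, $\sum\lambda_i=1$) of slices $S_i=\{x\in B_X:x^*(x)>1-\alpha\}$ ($x^*\in S_{X^*}$, $0<\alpha<1$) of its unit ball has diameter $2$. $X\widehat{\otimes}_\pi Y$ is the projective tensor product. For $u\in S_Z$, $\eta(Z,u)=\limsup_{\|h\|\to0}\frac{\|u+h\|+\|u-h\|-2}{\|h\|}$; the norm of $Z$ is non-rough if there is no $\varepsilon>0$ with $\eta(Z,u)\ge\varepsilon$ for all $u\in S_Z$. *)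

theory Defs
  imports "HOL-Analysis.Analysis"
begin

definition slice :: "('a::real_normed_vector \<Rightarrow>\<^sub>L real) \<Rightarrow> real \<Rightarrow> 'a set" where
  "slice f \<alpha> = {x. norm x \<le> 1 \<and> blinfun_apply f x > 1 - \<alpha>}"

definition SD2P :: "'a::real_normed_vector itself \<Rightarrow> bool" where
  "SD2P _ \<longleftrightarrow>
     (\<forall>(n::nat) (lam::nat \<Rightarrow> real) (f::nat \<Rightarrow> ('a \<Rightarrow>\<^sub>L real)) (\<alpha>::nat \<Rightarrow> real).
        (\<forall>i<n. 0 \<le> lam i) \<and> (\<Sum>i<n. lam i) = 1 \<and>
        (\<forall>i<n. norm (f i) = 1 \<and> 0 < \<alpha> i \<and> \<alpha> i < 1)
        \<longrightarrow> diameter {(\<Sum>i<n. lam i *\<^sub>R x i) | x::nat \<Rightarrow> 'a. \<forall>i<n. x i \<in> slice (f i) (\<alpha> i)} = 2)"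

definition eta :: "'a::real_normed_vector \<Rightarrow> ereal" where
  "eta u = Limsup (at 0) (\<lambda>h. ereal ((norm (u + h) + norm (u - h) - 2) / norm h))"

definition non_rough :: "'a::real_normed_vector itself \<Rightarrow> bool" where
  "non_rough _ \<longleftrightarrow> \<not> (\<exists>\<epsilon>>0. \<forall>u::'a. norm u = 1 \<longrightarrow> eta u \<ge> ereal \<epsilon>)"

definition bilinear_norm :: "('a::real_normed_vector \<Rightarrow> 'b::real_normed_vector \<Rightarrow> real) \<Rightarrow> real" where
  "bilinear_norm B = Sup {\<bar>B x y\<bar> | x y. norm x \<le> 1 \<and> norm y \<le> 1}"

text \<open>Z (with the map tp) is the projective tensor product of X and Y, characterised up to
  isometric isomorphism: tp is bilinear with norm(tp x y) <= norm x * norm y, the span of its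
  range is dense, and every bounded bilinear form B on X x Y is of the form phi o tp for a
  functional phi on Z with norm phi = norm B  (i.e. (X (x)_pi Y)^* = Bil(X x Y)).\<close>
definition is_proj_tensor :: "('a::real_normed_vector \<Rightarrow> 'b::real_normed_vector \<Rightarrow> 'c::real_normed_vector) \<Rightarrow> bool" where
  "is_proj_tensor tp \<longleftrightarrow>
     bounded_bilinear tp \<and>
     (\<forall>x y. norm (tp x y) \<le> norm x * norm y) \<and>
     closure (span (range (\<lambda>(x, y). tp x y))) = UNIV \<and>
     (\<forall>B::'a \<Rightarrow> 'b \<Rightarrow> real. bounded_bilinear B \<longrightarrow>
        (\<exists>\<phi>::'c \<Rightarrow>\<^sub>L real. (\<forall>x y. blinfun_apply \<phi> (tp x y) = B x y) \<and> norm \<phi> = bilinear_norm B))"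

end

theory Submission
  imports Defs
begin

text \<open>Non-roughness of the norm of X* gives a norm-one u in X* with slices of arbitrarily small
  diameter; fix x0 in such a slice. A slice of g in Y* is compared with the slice of the functional
  u \<otimes> g on the projective tensor product Z. The unit ball of Z is the closed convex hull of the
  tensors x \<otimes> y with x, y in the unit balls (a consequence of Z* = Bil(X \<times> Y) and Hahn-Banach),
  and a point of a thin slice of u \<otimes> g puts most of its weight on tensors with x in the slice of u
  and y in the slice of g; hence it is close to x0 \<otimes> y for some y in the slice of g. As y \<mapsto> x0 \<otimes> y
  does not increase distances, two almost antipodal points of a convex combination of slices in Z
  yield two almost antipodal points of the corresponding convex combination of slices in Y.\<close>

section \<open>Hahn-Banach for sublinear functionals\<close>

definition sublinear :: "('a::real_vector \<Rightarrow> real) \<Rightarrow> bool" where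
  "sublinear q \<longleftrightarrow> (\<forall>x y. q (x + y) \<le> q x + q y) \<and> (\<forall>c x. 0 \<le> c \<longrightarrow> q (c *\<^sub>R x) = c * q x)"

lemma sublinearD:
  assumes "sublinear q"
  shows sublinear_add_le: "q (x + y) \<le> q x + q y"
    and sublinear_scaleR: "0 \<le> c \<Longrightarrow> q (c *\<^sub>R x) = c * q x"
  using assms unfolding sublinear_def by blast+

lemma sublinear_zero: "sublinear q \<Longrightarrow> q 0 = 0"
  using sublinear_scaleR[of q 0 0] by simp

lemma sublinear_minus_le: "sublinear q \<Longrightarrow> - q (- x) \<le> q x"
  using sublinear_add_le[of q x "- x"] sublinear_zero[of q] by simp

lemma sublinear_norm: "sublinear norm"
  unfolding sublinear_def by (simp add: norm_triangle_ineq)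

definition dominated_graph :: "('a::real_vector \<Rightarrow> real) \<Rightarrow> ('a \<times> real) set \<Rightarrow> bool" where
  "dominated_graph q G \<longleftrightarrow>
     (\<forall>x a b. (x, a) \<in> G \<longrightarrow> (x, b) \<in> G \<longrightarrow> a = b) \<and>
     (\<forall>x a y b. (x, a) \<in> G \<longrightarrow> (y, b) \<in> G \<longrightarrow> (x + y, a + b) \<in> G) \<and>
     (\<forall>x a c. (x, a) \<in> G \<longrightarrow> (c *\<^sub>R x, c * a) \<in> G) \<and>
     (\<forall>x a. (x, a) \<in> G \<longrightarrow> a \<le> q x)"

lemma dominated_graphD:
  assumes "dominated_graph q G"
  shows dominated_graph_unique: "(x, a) \<in> G \<Longrightarrow> (x, b) \<in> G \<Longrightarrow> a = b"
    and dominated_graph_add: "(x, a) \<in> G \<Longrightarrow> (y, b) \<in> G \<Longrightarrow> (x + y, a + b) \<in> G"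
    and dominated_graph_scaleR: "(x, a) \<in> G \<Longrightarrow> (c *\<^sub>R x, c * a) \<in> G"
    and dominated_graph_le: "(x, a) \<in> G \<Longrightarrow> a \<le> q x"
  using assms unfolding dominated_graph_def by blast+

lemma dominated_graph_zero: "sublinear q \<Longrightarrow> dominated_graph q {(0, 0)}"
  unfolding dominated_graph_def by (simp add: sublinear_zero)

lemma dominated_graph_chain_Union:
  assumes dom: "\<And>G. G \<in> C \<Longrightarrow> dominated_graph q G"
    and chain: "\<And>G H. G \<in> C \<Longrightarrow> H \<in> C \<Longrightarrow> G \<subseteq> H \<or> H \<subseteq> G"
  shows "dominated_graph q (\<Union>C)"
proof -
  have common: "\<exists>G\<in>C. p \<in> G \<and> p' \<in> G" if "p \<in> \<Union>C" "p' \<in> \<Union>C" for p p'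
    using that chain by blast
  show ?thesis
    unfolding dominated_graph_def
  proof (intro conjI allI impI)
    fix x a b assume "(x, a) \<in> \<Union>C" "(x, b) \<in> \<Union>C"
    then show "a = b" using common dom dominated_graph_unique by metis
  next
    fix x a y b assume "(x, a) \<in> \<Union>C" "(y, b) \<in> \<Union>C"
    then show "(x + y, a + b) \<in> \<Union>C" using common dom dominated_graph_add by (metis UnionI)
  next
    fix x a c assume "(x, a) \<in> \<Union>C"
    then show "(c *\<^sub>R x, c * a) \<in> \<Union>C" using dom dominated_graph_scaleR by blast
  next
    fix x a assume "(x, a) \<in> \<Union>C"
    then show "a \<le> q x" using dom dominated_graph_le by blast
  qed
qed

definition graph_extension :: "('a::real_vector \<times> real) set \<Rightarrow> 'a \<Rightarrow> real \<Rightarrow> ('a \<times> real) set" where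
  "graph_extension G v c = {(x + t *\<^sub>R v, a + t * c) | x a t. (x, a) \<in> G}"

lemma graph_extension_iff:
  "(z, b) \<in> graph_extension G v c \<longleftrightarrow> (\<exists>x a t. z = x + t *\<^sub>R v \<and> b = a + t * c \<and> (x, a) \<in> G)"
  unfolding graph_extension_def by blast

lemma subset_graph_extension: "G \<subseteq> graph_extension G v c"
  by (force simp: graph_extension_iff)

lemma graph_extension_mem: "(0, 0) \<in> G \<Longrightarrow> (v, c) \<in> graph_extension G v c"
  by (force simp: graph_extension_iff)

text \<open>The values at v that keep the extension dominated lie between the two bounds below; they
  form a nonempty interval because a + b \<le> q (x + y) \<le> q (x + v) + q (y - v).\<close>

lemma dominated_graph_extension_value:
  assumes q: "sublinear q" and G: "dominated_graph q G" "(0, 0) \<in> G"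
  obtains c where "\<And>y b. (y, b) \<in> G \<Longrightarrow> b - q (y - v) \<le> c"
    and "\<And>x a. (x, a) \<in> G \<Longrightarrow> c \<le> q (x + v) - a"
proof -
  have key: "b - q (y - v) \<le> q (x + v) - a" if "(x, a) \<in> G" "(y, b) \<in> G" for x a y b
  proof -
    have "a + b \<le> q ((x + v) + (y - v))"
      using dominated_graph_le[OF G(1) dominated_graph_add[OF G(1) that]] by simp
    also have "\<dots> \<le> q (x + v) + q (y - v)" by (rule sublinear_add_le[OF q])
    finally show ?thesis by simp
  qed
  define L where "L = {b - q (y - v) | y b. (y, b) \<in> G}"
  have "L \<noteq> {}" "bdd_above L"
    using G(2) key[OF G(2)] unfolding L_def by (auto intro!: bdd_aboveI)
  then show ?thesis
    using key by (intro that[of "Sup L"]) (auto simp: L_def intro!: cSup_upper cSup_least)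
qed

lemma graph_extension_le:
  assumes q: "sublinear q" and G: "dominated_graph q G" "(x, a) \<in> G"
    and lower: "\<And>y b. (y, b) \<in> G \<Longrightarrow> b - q (y - v) \<le> c"
    and upper: "\<And>x a. (x, a) \<in> G \<Longrightarrow> c \<le> q (x + v) - a"
  shows "a + t * c \<le> q (x + t *\<^sub>R v)"
proof (cases "0 < t")
  case True
  have "c \<le> q ((1 / t) *\<^sub>R x + v) - (1 / t) * a"
    using upper[OF dominated_graph_scaleR[OF G]] .
  then have "t * c \<le> t * q ((1 / t) *\<^sub>R x + v) - a"
    using True by (simp add: field_simps)
  also have "t * q ((1 / t) *\<^sub>R x + v) = q (t *\<^sub>R ((1 / t) *\<^sub>R x + v))"
    using sublinear_scaleR[OF q, of t] True by simp
  also have "t *\<^sub>R ((1 / t) *\<^sub>R x + v) = x + t *\<^sub>R v"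
    using True by (simp add: scaleR_add_right)
  finally show ?thesis by simp
next
  case False
  define s where "s = - t"
  show ?thesis
  proof (cases "s = 0")
    case True
    then show ?thesis using dominated_graph_le[OF G] s_def by simp
  next
    case False
    then have s: "0 < s" using \<open>\<not> 0 < t\<close> s_def by simp
    have "(1 / s) * a - q ((1 / s) *\<^sub>R x - v) \<le> c"
      using lower[OF dominated_graph_scaleR[OF G]] .
    then have "a - s * c \<le> s * q ((1 / s) *\<^sub>R x - v)"
      using s by (simp add: field_simps)
    also have "s * q ((1 / s) *\<^sub>R x - v) = q (s *\<^sub>R ((1 / s) *\<^sub>R x - v))"
      using sublinear_scaleR[OF q, of s] s by simp
    also have "s *\<^sub>R ((1 / s) *\<^sub>R x - v) = x + t *\<^sub>R v"
      using s s_def by (simp add: scaleR_diff_right)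
    finally show ?thesis using s_def by simp
  qed
qed

lemma dominated_graph_extension:
  assumes q: "sublinear q" and G: "dominated_graph q G" and v: "\<And>a. (v, a) \<notin> G"
    and lower: "\<And>y b. (y, b) \<in> G \<Longrightarrow> b - q (y - v) \<le> c"
    and upper: "\<And>x a. (x, a) \<in> G \<Longrightarrow> c \<le> q (x + v) - a"
  shows "dominated_graph q (graph_extension G v c)"
  unfolding dominated_graph_def graph_extension_iff
proof (intro conjI allI impI; elim exE conjE)
  fix z b b' x a s y a' t
  assume xs: "z = x + s *\<^sub>R v" "b = a + s * c" "(x, a) \<in> G"
    and yt: "z = y + t *\<^sub>R v" "b' = a' + t * c" "(y, a') \<in> G"
  have "s = t"
  proof (rule ccontr)
    assume "s \<noteq> t"
    have "(y - x, a' - a) \<in> G"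
      using dominated_graph_add[OF G yt(3) dominated_graph_scaleR[OF G xs(3), of "-1"]] by simp
    moreover have "(s - t) *\<^sub>R v = y - x"
      using xs(1) yt(1) by (simp add: algebra_simps)
    then have "v = (1 / (s - t)) *\<^sub>R (y - x)"
      using \<open>s \<noteq> t\<close> by (metis divide_self_if eq_vector_fraction_iff right_minus_eq scaleR_one)
    ultimately show False using v dominated_graph_scaleR[OF G] by metis
  qed
  then show "b = b'" using xs yt dominated_graph_unique[OF G] by simp
next
  fix z b z' b' x a s y a' t
  assume "z = x + s *\<^sub>R v" "b = a + s * c" "(x, a) \<in> G"
    and "z' = y + t *\<^sub>R v" "b' = a' + t * c" "(y, a') \<in> G"
  moreover from this have "(x + y, a + a') \<in> G" using dominated_graph_add[OF G] by blast
  ultimately show "\<exists>w d r. z + z' = w + r *\<^sub>R v \<and> b + b' = d + r * c \<and> (w, d) \<in> G"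
    by (intro exI[of _ "x + y"] exI[of _ "a + a'"] exI[of _ "s + t"]) (simp add: algebra_simps)
next
  fix r z b x a t
  assume "z = x + t *\<^sub>R v" "b = a + t * c" "(x, a) \<in> G"
  moreover from this have "(r *\<^sub>R x, r * a) \<in> G" using dominated_graph_scaleR[OF G] by blast
  ultimately show "\<exists>w d s. r *\<^sub>R z = w + s *\<^sub>R v \<and> r * b = d + s * c \<and> (w, d) \<in> G"
    by (intro exI[of _ "r *\<^sub>R x"] exI[of _ "r * a"] exI[of _ "r * t"]) (simp add: algebra_simps)
next
  fix z b x a t
  assume "z = x + t *\<^sub>R v" "b = a + t * c" "(x, a) \<in> G"
  then show "b \<le> q z"
    using graph_extension_le[OF q G _ lower upper] by blast
qed

lemma dominated_graph_through:
  assumes q: "sublinear q"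
  obtains G where "dominated_graph q G" "(x0, q x0) \<in> G"
proof (cases "x0 = 0")
  case True
  then show ?thesis using that dominated_graph_zero[OF q] sublinear_zero[OF q] by simp
next
  case False
  have "dominated_graph q (graph_extension {(0, 0)} x0 (q x0))"
    using False sublinear_minus_le[OF q, of x0]
    by (intro dominated_graph_extension[OF q dominated_graph_zero[OF q]]) auto
  then show ?thesis using that graph_extension_mem by blast
qed

theorem Hahn_Banach_sublinear:
  assumes q: "sublinear q"
  obtains F where "linear F" "\<And>x. F x \<le> q x" "F x0 = q x0"
proof -
  define A where "A = {G. dominated_graph q G \<and> (x0, q x0) \<in> G}"
  have "\<exists>M\<in>A. \<forall>G\<in>A. M \<subseteq> G \<longrightarrow> G = M"
  proof (rule subset_Zorn_nonempty)
    show "A \<noteq> {}" using dominated_graph_through[OF q] unfolding A_def by blast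
    show "\<Union>C \<in> A" if "C \<noteq> {}" "subset.chain A C" for C
      using that dominated_graph_chain_Union[of C q] unfolding A_def subset_chain_def by blast
  qed
  then obtain M where M: "dominated_graph q M" "(x0, q x0) \<in> M"
    and maximal: "\<And>G. dominated_graph q G \<Longrightarrow> M \<subseteq> G \<Longrightarrow> G = M"
    unfolding A_def by blast
  have M0: "(0, 0) \<in> M" using dominated_graph_scaleR[OF M, of 0] by simp
  have total: "\<exists>a. (v, a) \<in> M" for v
  proof (rule ccontr)
    assume v: "\<nexists>a. (v, a) \<in> M"
    obtain c where lower: "\<And>y b. (y, b) \<in> M \<Longrightarrow> b - q (y - v) \<le> c"
      and upper: "\<And>x a. (x, a) \<in> M \<Longrightarrow> c \<le> q (x + v) - a"
      using dominated_graph_extension_value[OF q M(1) M0] by blast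
    have "graph_extension M v c = M"
      using dominated_graph_extension[OF q M(1) _ lower upper] v
      by (intro maximal subset_graph_extension) blast
    then show False using graph_extension_mem[OF M0, of v c] v by blast
  qed
  define F where "F x = (THE a. (x, a) \<in> M)" for x
  have F_eq: "F x = a" if "(x, a) \<in> M" for x a
    unfolding F_def using that dominated_graph_unique[OF M(1)] by blast
  have F_mem: "(x, F x) \<in> M" for x
    using total[of x] F_eq by blast
  have "linear F"
    by (rule linearI) (use F_eq F_mem dominated_graph_add[OF M(1)] dominated_graph_scaleR[OF M(1)] in auto)
  then show ?thesis
    using that F_mem F_eq[OF M(2)] dominated_graph_le[OF M(1)] by blast
qed

lemma dominated_blinfun:
  fixes q :: "'a::real_normed_vector \<Rightarrow> real"
  assumes q: "sublinear q" and bound: "\<And>x. q x \<le> C * norm x" and C: "0 \<le> C"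
  obtains f :: "'a \<Rightarrow>\<^sub>L real" where "\<And>x. blinfun_apply f x \<le> q x" "blinfun_apply f x0 = q x0" "norm f \<le> C"
proof -
  obtain F where F: "linear F" "\<And>x. F x \<le> q x" "F x0 = q x0"
    using Hahn_Banach_sublinear[OF q] by blast
  have F_abs: "\<bar>F x\<bar> \<le> C * norm x" for x
    using F(2)[of x] F(2)[of "- x"] bound[of x] bound[of "- x"] linear_neg[OF F(1), of x] by simp
  have "bounded_linear F"
    using F(1) F_abs by (intro bounded_linear_intro[of F C]) (auto simp: linear_add linear_scale mult.commute)
  then have "blinfun_apply (Blinfun F) = F" by (rule bounded_linear_Blinfun_apply)
  moreover from this have "norm (Blinfun F) \<le> C" using F_abs C by (intro norm_blinfun_bound) auto
  ultimately show ?thesis using that F by metis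
qed

lemma norming_functional:
  fixes x :: "'a::real_normed_vector"
  obtains h :: "'a \<Rightarrow>\<^sub>L real" where "norm h \<le> 1" "blinfun_apply h x = norm x"
  using dominated_blinfun[OF sublinear_norm, of 1 x] by auto

lemma blinfun_abs_le_norm:
  fixes f :: "'a::real_normed_vector \<Rightarrow>\<^sub>L real"
  shows "norm x \<le> 1 \<Longrightarrow> \<bar>blinfun_apply f x\<bar> \<le> norm f"
  using norm_blinfun[of f x] mult_left_le[of "norm x" "norm f"] by simp

lemma blinfun_le_norm:
  fixes f :: "'a::real_normed_vector \<Rightarrow>\<^sub>L real"
  shows "norm x \<le> 1 \<Longrightarrow> blinfun_apply f x \<le> norm f"
  using blinfun_abs_le_norm[of x f] by linarith

lemma blinfun_diff_le:
  fixes f :: "'a::real_normed_vector \<Rightarrow>\<^sub>L real"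
  shows "blinfun_apply f z - blinfun_apply f k \<le> norm f * norm (z - k)"
  using norm_blinfun[of f "z - k"] by (simp add: blinfun.diff_right)

lemma norm_blinfun_unit_ball_bound:
  assumes "0 \<le> b" and bound: "\<And>x. norm x \<le> 1 \<Longrightarrow> norm (blinfun_apply f x) \<le> b"
  shows "norm f \<le> b"
proof (rule norm_blinfun_bound[OF \<open>0 \<le> b\<close>])
  fix x
  show "norm (blinfun_apply f x) \<le> b * norm x"
  proof (cases "x = 0")
    case False
    have "norm (blinfun_apply f ((1 / norm x) *\<^sub>R x)) \<le> b"
      using False by (intro bound) simp
    then show ?thesis
      using False by (simp add: blinfun.scaleR_right field_simps)
  qed simp
qed

lemma almost_norming_point:
  fixes f :: "'a::real_normed_vector \<Rightarrow>\<^sub>L real"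
  assumes "0 < e"
  obtains x where "norm x \<le> 1" "norm f - e < blinfun_apply f x"
proof -
  have "\<exists>x. norm x \<le> 1 \<and> norm f - e < blinfun_apply f x"
  proof (rule ccontr)
    assume "\<nexists>x. norm x \<le> 1 \<and> norm f - e < blinfun_apply f x"
    then have le: "blinfun_apply f x \<le> norm f - e" if "norm x \<le> 1" for x
      using that by (meson not_le)
    have "norm f \<le> norm f - e"
    proof (rule norm_blinfun_unit_ball_bound)
      show "0 \<le> norm f - e" using le[of 0] by simp
      show "norm (blinfun_apply f x) \<le> norm f - e" if "norm x \<le> 1" for x
        using le[of x] le[of "- x"] that by (simp add: blinfun.minus_right)
    qed
    then show False using assms by simp
  qed
  then show ?thesis using that by blast
qed

lemma slice_nonempty: "norm f = 1 \<Longrightarrow> 0 < \<alpha> \<Longrightarrow> slice f \<alpha> \<noteq> {}"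
  using almost_norming_point[of \<alpha> f] unfolding slice_def by auto

lemma slice_subset_cball: "slice f \<alpha> \<subseteq> cball 0 1"
  unfolding slice_def by auto

lemma convex_slice: "convex (slice f \<alpha>)"
proof -
  have "slice f \<alpha> = cball 0 1 \<inter> blinfun_apply f -` {1 - \<alpha> <..}"
    unfolding slice_def by auto
  moreover have "convex (blinfun_apply f -` {1 - \<alpha> <..})"
    by (intro convex_linear_vimage blinfun.bounded_linear_right[THEN bounded_linear.linear]) simp
  ultimately show ?thesis by (simp add: convex_Int)
qed

text \<open>Directional smallness of eta at u makes u + h and u - h almost norming at once; testing them
  against two points of a thin slice and a functional norming their difference bounds that difference.\<close>

lemma thin_slice_of_eta_less:
  fixes u :: "'a::real_normed_vector \<Rightarrow>\<^sub>L real"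
  assumes eta: "eta u < ereal \<epsilon>" and "0 < \<epsilon>"
  obtains \<beta> where "0 < \<beta>" "\<And>x1 x2. x1 \<in> slice u \<beta> \<Longrightarrow> x2 \<in> slice u \<beta> \<Longrightarrow> norm (x1 - x2) < 2 * \<epsilon>"
proof -
  have "eventually (\<lambda>h. ereal ((norm (u + h) + norm (u - h) - 2) / norm h) < ereal \<epsilon>) (at 0)"
    using Limsup_lessD[OF eta[unfolded eta_def]] .
  then obtain d where "0 < d"
    and d: "\<And>h. h \<noteq> 0 \<Longrightarrow> norm h < d \<Longrightarrow> (norm (u + h) + norm (u - h) - 2) / norm h < \<epsilon>"
    unfolding eventually_at dist_norm by auto
  define t where "t = d / 2"
  have t: "0 < t" "t < d" using \<open>0 < d\<close> by (auto simp: t_def)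
  have "norm (x1 - x2) < 2 * \<epsilon>" if x: "x1 \<in> slice u (\<epsilon> * t / 2)" "x2 \<in> slice u (\<epsilon> * t / 2)" for x1 x2
  proof (cases "x1 = x2")
    case False
    obtain h0 :: "'a \<Rightarrow>\<^sub>L real" where h0: "norm h0 \<le> 1" "blinfun_apply h0 (x1 - x2) = norm (x1 - x2)"
      using norming_functional by blast
    have "norm (x1 - x2) \<le> norm h0 * norm (x1 - x2)"
      using h0(2) norm_blinfun[of h0 "x1 - x2"] by simp
    then have "norm h0 = 1"
      using h0(1) False by simp
    have "t *\<^sub>R h0 \<noteq> 0" "norm (t *\<^sub>R h0) < d"
      using \<open>norm h0 = 1\<close> t by auto
    then have "(norm (u + t *\<^sub>R h0) + norm (u - t *\<^sub>R h0) - 2) / t < \<epsilon>"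
      using d[of "t *\<^sub>R h0"] \<open>norm h0 = 1\<close> t by simp
    then have lt: "norm (u + t *\<^sub>R h0) + norm (u - t *\<^sub>R h0) - 2 < \<epsilon> * t"
      using t by (simp add: divide_less_eq)
    have "blinfun_apply (u + t *\<^sub>R h0) x1 + blinfun_apply (u - t *\<^sub>R h0) x2
        = blinfun_apply u x1 + blinfun_apply u x2 + t * norm (x1 - x2)"
      using h0(2) by (simp add: plus_blinfun.rep_eq minus_blinfun.rep_eq scaleR_blinfun.rep_eq blinfun.diff_right algebra_simps)
    moreover have "blinfun_apply (u + t *\<^sub>R h0) x1 \<le> norm (u + t *\<^sub>R h0)"
      and "blinfun_apply (u - t *\<^sub>R h0) x2 \<le> norm (u - t *\<^sub>R h0)"
      using x unfolding slice_def by (simp_all add: blinfun_le_norm)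
    moreover have "1 - \<epsilon> * t / 2 < blinfun_apply u x1" "1 - \<epsilon> * t / 2 < blinfun_apply u x2"
      using x by (auto simp: slice_def)
    ultimately have "t * norm (x1 - x2) < 2 * (\<epsilon> * t)"
      using lt by linarith
    also have "\<dots> = t * (2 * \<epsilon>)" by simp
    finally show ?thesis using t by simp
  qed (use \<open>0 < \<epsilon>\<close> in simp)
  then show ?thesis using that[of "\<epsilon> * t / 2"] \<open>0 < \<epsilon>\<close> t by simp
qed

section \<open>Separating a point from a convex set\<close>

text \<open>The infimal convolution of the gauge of K with M * norm: unlike the gauge it is finite
  everywhere, bounded by M * norm, and still at most 1 on K.\<close>

definition penalized_gauge :: "'a::real_normed_vector set \<Rightarrow> real \<Rightarrow> 'a \<Rightarrow> real" where
  "penalized_gauge K M w = Inf {c + M * norm (w - c *\<^sub>R k) | c k. 0 \<le> c \<and> k \<in> K}"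

lemma penalized_gauge_le:
  assumes "0 \<le> M" "0 \<le> c" "k \<in> K"
  shows "penalized_gauge K M w \<le> c + M * norm (w - c *\<^sub>R k)"
  unfolding penalized_gauge_def using assms
  by (intro cInf_lower) (auto intro!: bdd_belowI[of _ 0])

lemma penalized_gauge_greatest:
  assumes "K \<noteq> {}" and "\<And>c k. 0 \<le> c \<Longrightarrow> k \<in> K \<Longrightarrow> a \<le> c + M * norm (w - c *\<^sub>R k)"
  shows "a \<le> penalized_gauge K M w"
proof -
  obtain k0 where "k0 \<in> K" using assms(1) by blast
  then have "0 + M * norm (w - 0 *\<^sub>R k0) \<in> {c + M * norm (w - c *\<^sub>R k) | c k. 0 \<le> c \<and> k \<in> K}"
    by blast
  then show ?thesis
    unfolding penalized_gauge_def using assms(2) by (intro cInf_greatest) auto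
qed

lemma penalized_gauge_nonneg:
  assumes "K \<noteq> {}" "0 \<le> M"
  shows "0 \<le> penalized_gauge K M w"
  using assms by (intro penalized_gauge_greatest) auto

lemma penalized_gauge_le_norm:
  assumes "K \<noteq> {}" "0 \<le> M"
  shows "penalized_gauge K M w \<le> M * norm w"
  using assms penalized_gauge_le[of M 0] by auto

lemma penalized_gauge_add_le:
  assumes K: "convex K" "K \<noteq> {}" and M: "0 \<le> M"
  shows "penalized_gauge K M (w1 + w2) \<le> penalized_gauge K M w1 + penalized_gauge K M w2"
proof -
  have sum_le: "penalized_gauge K M (w1 + w2) \<le> (c1 + M * norm (w1 - c1 *\<^sub>R k1)) + (c2 + M * norm (w2 - c2 *\<^sub>R k2))"
    if c: "0 \<le> c1" "0 \<le> c2" and k: "k1 \<in> K" "k2 \<in> K" for c1 c2 :: real and k1 k2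
  proof -
    define c where "c = c1 + c2"
    define k where "k = (if c = 0 then k1 else (c1 / c) *\<^sub>R k1 + (c2 / c) *\<^sub>R k2)"
    have "k \<in> K"
      using convexD[OF K(1) k, of "c1 / c" "c2 / c"] c k
      by (auto simp: k_def c_def add_divide_distrib[symmetric])
    have "c = 0 \<Longrightarrow> c1 = 0 \<and> c2 = 0" using c by (simp add: c_def)
    then have ck: "c *\<^sub>R k = c1 *\<^sub>R k1 + c2 *\<^sub>R k2"
      by (auto simp: k_def c_def scaleR_add_right)
    have "penalized_gauge K M (w1 + w2) \<le> c + M * norm ((w1 - c1 *\<^sub>R k1) + (w2 - c2 *\<^sub>R k2))"
      using penalized_gauge_le[OF M _ \<open>k \<in> K\<close>, of c "w1 + w2"] c ck by (simp add: c_def algebra_simps)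
    also have "\<dots> \<le> c + M * (norm (w1 - c1 *\<^sub>R k1) + norm (w2 - c2 *\<^sub>R k2))"
      using M by (intro add_left_mono mult_left_mono norm_triangle_ineq)
    finally show ?thesis by (simp add: c_def distrib_left)
  qed
  have "penalized_gauge K M (w1 + w2) - (c2 + M * norm (w2 - c2 *\<^sub>R k2)) \<le> penalized_gauge K M w1"
    if "0 \<le> c2" "k2 \<in> K" for c2 k2
  proof (rule penalized_gauge_greatest[OF K(2)])
    fix c1 :: real and k1 assume "0 \<le> c1" "k1 \<in> K"
    then show "penalized_gauge K M (w1 + w2) - (c2 + M * norm (w2 - c2 *\<^sub>R k2)) \<le> c1 + M * norm (w1 - c1 *\<^sub>R k1)"
      using sum_le[of c1 c2 k1 k2] that by simp
  qed
  then have "penalized_gauge K M (w1 + w2) - penalized_gauge K M w1 \<le> penalized_gauge K M w2"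
    by (intro penalized_gauge_greatest[OF K(2)]) (simp add: algebra_simps)
  then show ?thesis by simp
qed

lemma penalized_gauge_scaleR:
  assumes K: "K \<noteq> {}" and M: "0 \<le> M" and a: "0 < a"
  shows "penalized_gauge K M (a *\<^sub>R w) = a * penalized_gauge K M w"
proof (rule antisym)
  have "penalized_gauge K M (a *\<^sub>R w) / a \<le> c + M * norm (w - c *\<^sub>R k)" if "0 \<le> c" "k \<in> K" for c k
  proof -
    have "norm (a *\<^sub>R w - (a * c) *\<^sub>R k) = norm (a *\<^sub>R (w - c *\<^sub>R k))"
      by (simp add: scaleR_diff_right)
    then have eq: "norm (a *\<^sub>R w - (a * c) *\<^sub>R k) = a * norm (w - c *\<^sub>R k)"
      using a by simp
    have "penalized_gauge K M (a *\<^sub>R w) \<le> a * c + M * norm (a *\<^sub>R w - (a * c) *\<^sub>R k)"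
      using penalized_gauge_le[OF M _ \<open>k \<in> K\<close>, of "a * c" "a *\<^sub>R w"] that a by simp
    also have "\<dots> = a * (c + M * norm (w - c *\<^sub>R k))"
      unfolding eq by (simp add: algebra_simps)
    finally show ?thesis using a by (simp add: pos_divide_le_eq mult.commute)
  qed
  then have "penalized_gauge K M (a *\<^sub>R w) / a \<le> penalized_gauge K M w"
    using K by (intro penalized_gauge_greatest) auto
  then show "penalized_gauge K M (a *\<^sub>R w) \<le> a * penalized_gauge K M w"
    using a by (simp add: pos_divide_le_eq mult.commute)
next
  have "a * penalized_gauge K M w \<le> c + M * norm (a *\<^sub>R w - c *\<^sub>R k)" if "0 \<le> c" "k \<in> K" for c k
  proof -
    have "penalized_gauge K M w \<le> c / a + M * norm (w - (c / a) *\<^sub>R k)"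
      using penalized_gauge_le[OF M _ \<open>k \<in> K\<close>, of "c / a" w] that a by simp
    then have "a * penalized_gauge K M w \<le> a * (c / a + M * norm (w - (c / a) *\<^sub>R k))"
      using a by simp
    also have "norm (w - (c / a) *\<^sub>R k) = norm ((1 / a) *\<^sub>R (a *\<^sub>R w - c *\<^sub>R k))"
      using a by (simp add: scaleR_diff_right)
    also have "\<dots> = norm (a *\<^sub>R w - c *\<^sub>R k) / a"
      using a by simp
    also have "a * (c / a + M * \<dots>) = c + M * norm (a *\<^sub>R w - c *\<^sub>R k)"
      using a by (simp add: field_simps)
    finally show ?thesis .
  qed
  then show "a * penalized_gauge K M w \<le> penalized_gauge K M (a *\<^sub>R w)"
    using K by (intro penalized_gauge_greatest) auto
qed

lemma sublinear_penalized_gauge: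
  assumes "convex K" "K \<noteq> {}" "0 \<le> M"
  shows "sublinear (penalized_gauge K M)"
  unfolding sublinear_def
proof (intro conjI allI impI)
  show "penalized_gauge K M (x + y) \<le> penalized_gauge K M x + penalized_gauge K M y" for x y
    using assms by (rule penalized_gauge_add_le)
  show "penalized_gauge K M (c *\<^sub>R x) = c * penalized_gauge K M x" if "0 \<le> c" for c x
  proof (cases "c = 0")
    case True
    then show ?thesis
      using assms penalized_gauge_nonneg[of K M 0] penalized_gauge_le_norm[of K M 0] by simp
  next
    case False
    then show ?thesis using penalized_gauge_scaleR[OF assms(2,3)] that by simp
  qed
qed

text \<open>For c \<le> 1 the point c k still lies in K, while for c > 1 the distance to c k is at most
  c - 1 smaller than the distance to k.\<close>

lemma penalized_gauge_far_point:
  assumes K: "convex K" "0 \<in> K" "K \<subseteq> cball 0 1"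
    and far: "\<And>k. k \<in> K \<Longrightarrow> r \<le> norm (z - k)" and r: "0 < r"
    and M: "1 \<le> M" "2 \<le> M * r"
  shows "1 < penalized_gauge K M z"
proof -
  have "1 + min 1 r \<le> c + M * norm (z - c *\<^sub>R k)" if c: "0 \<le> c" and k: "k \<in> K" for c k
  proof (cases "c \<le> 1")
    case True
    have "c *\<^sub>R k \<in> K"
      using convexD[OF K(1) k K(2), of c "1 - c"] c True by simp
    then have "M * r \<le> M * norm (z - c *\<^sub>R k)"
      using far M by (intro mult_left_mono) auto
    then show ?thesis using M c by linarith
  next
    case False
    have "norm k \<le> 1" using K(3) k by auto
    have "norm (z - k) \<le> norm (z - c *\<^sub>R k) + norm ((c - 1) *\<^sub>R k)"
      using norm_triangle_ineq[of "z - c *\<^sub>R k" "(c - 1) *\<^sub>R k"] by (simp add: algebra_simps)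
    also have "norm ((c - 1) *\<^sub>R k) \<le> c - 1"
      using False \<open>norm k \<le> 1\<close> mult_left_le[of "norm k" "c - 1"] by simp
    finally have "r - (c - 1) \<le> norm (z - c *\<^sub>R k)"
      using far[OF k] by linarith
    moreover have "norm (z - c *\<^sub>R k) \<le> M * norm (z - c *\<^sub>R k)"
      using M mult_right_mono[of 1 M "norm (z - c *\<^sub>R k)"] by simp
    ultimately show ?thesis by linarith
  qed
  then have "1 + min 1 r \<le> penalized_gauge K M z"
    using K(2) by (intro penalized_gauge_greatest) auto
  then show ?thesis using r by linarith
qed

lemma separation_from_far_convex:
  fixes K :: "'a::real_normed_vector set"
  assumes K: "convex K" "0 \<in> K" "K \<subseteq> cball 0 1"
    and far: "\<And>k. k \<in> K \<Longrightarrow> r \<le> norm (z - k)" and r: "0 < r"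
  obtains f :: "'a \<Rightarrow>\<^sub>L real" where "\<And>k. k \<in> K \<Longrightarrow> blinfun_apply f k \<le> 1" "1 < blinfun_apply f z"
proof -
  define M where "M = 1 + 2 / r"
  have M: "1 \<le> M" "2 \<le> M * r"
    using r by (auto simp: M_def distrib_right)
  have "K \<noteq> {}" using K(2) by blast
  obtain f :: "'a \<Rightarrow>\<^sub>L real" where f: "\<And>w. blinfun_apply f w \<le> penalized_gauge K M w"
    "blinfun_apply f z = penalized_gauge K M z"
    using dominated_blinfun[OF sublinear_penalized_gauge[OF K(1) \<open>K \<noteq> {}\<close>] penalized_gauge_le_norm, of M z]
      \<open>K \<noteq> {}\<close> M by force
  show ?thesis
  proof (rule that)
    show "blinfun_apply f k \<le> 1" if "k \<in> K" for k
      using f(1)[of k] penalized_gauge_le[of M 1 k K k] M that by simp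
    show "1 < blinfun_apply f z"
      using f(2) penalized_gauge_far_point[OF K far r M] by simp
  qed
qed

section \<open>Projective tensor products\<close>

lemma bounded_linear_compose_bilinear:
  assumes f: "bounded_linear f" and b: "bounded_bilinear b"
  shows "bounded_bilinear (\<lambda>x y. f (b x y))"
proof -
  interpret f: bounded_linear f by (rule f)
  interpret b: bounded_bilinear b by (rule b)
  obtain Kf where Kf: "\<And>z. norm (f z) \<le> norm z * Kf" "0 < Kf" using f.pos_bounded by blast
  obtain Kb where Kb: "\<And>x y. norm (b x y) \<le> norm x * norm y * Kb" using b.bounded by blast
  show ?thesis
  proof
    show "\<exists>K. \<forall>x y. norm (f (b x y)) \<le> norm x * norm y * K"
    proof (intro exI allI)
      fix x y
      have "norm (f (b x y)) \<le> norm x * norm y * Kb * Kf"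
        using Kf(1)[of "b x y"] mult_right_mono[OF Kb[of x y] less_imp_le[OF Kf(2)]] by linarith
      then show "norm (f (b x y)) \<le> norm x * norm y * (Kb * Kf)" by (simp add: mult.assoc)
    qed
  qed (simp_all add: b.add_left b.add_right b.scaleR_left b.scaleR_right f.add f.scaleR)
qed

lemma bilinear_norm_le:
  assumes "\<And>x y. norm x \<le> 1 \<Longrightarrow> norm y \<le> 1 \<Longrightarrow> \<bar>B x y\<bar> \<le> C"
  shows "bilinear_norm B \<le> C"
proof -
  have "\<bar>B 0 0\<bar> \<in> {\<bar>B x y\<bar> | x y. norm x \<le> 1 \<and> norm y \<le> 1}" by force
  then show ?thesis
    unfolding bilinear_norm_def using assms by (intro cSup_least) auto
qed

lemma bilinear_norm_ge:
  assumes "bounded_bilinear B" "norm x \<le> 1" "norm y \<le> 1"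
  shows "\<bar>B x y\<bar> \<le> bilinear_norm B"
proof -
  obtain K where K: "\<And>x y. norm (B x y) \<le> norm x * norm y * K" "0 < K"
    using bounded_bilinear.pos_bounded[OF assms(1)] by blast
  have "\<bar>B x' y'\<bar> \<le> K" if "norm x' \<le> 1" "norm y' \<le> 1" for x' y'
  proof -
    have "norm x' * norm y' * K \<le> 1 * K"
      using that K(2) by (intro mult_right_mono mult_le_one) auto
    then show ?thesis using K(1)[of x' y'] by simp
  qed
  then show ?thesis
    unfolding bilinear_norm_def using assms(2,3) by (intro cSup_upper) (auto intro!: bdd_aboveI[of _ K])
qed

lemma bilinear_norm_product:
  fixes u :: "'a::real_normed_vector \<Rightarrow>\<^sub>L real" and g :: "'b::real_normed_vector \<Rightarrow>\<^sub>L real"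
  defines "B \<equiv> \<lambda>x y. blinfun_apply u x * blinfun_apply g y"
  shows "bilinear_norm B = norm u * norm g"
proof (rule antisym)
  show "bilinear_norm B \<le> norm u * norm g"
    unfolding B_def using blinfun_abs_le_norm[of _ u] blinfun_abs_le_norm[of _ g]
    by (intro bilinear_norm_le) (simp add: abs_mult mult_mono)
  have bil: "bounded_bilinear B"
    unfolding B_def by (rule bounded_bilinear.comp[OF bounded_bilinear_mult blinfun.bounded_linear_right blinfun.bounded_linear_right])
  have S0: "0 \<le> bilinear_norm B" using bilinear_norm_ge[OF bil, of 0 0] by simp
  have bound: "norm u * \<bar>blinfun_apply g y\<bar> \<le> bilinear_norm B" if y: "norm y \<le> 1" for y
  proof (cases "blinfun_apply g y = 0")
    case False
    then have gy: "0 < \<bar>blinfun_apply g y\<bar>" by simp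
    have "norm u \<le> bilinear_norm B / \<bar>blinfun_apply g y\<bar>"
    proof (rule norm_blinfun_unit_ball_bound)
      show "0 \<le> bilinear_norm B / \<bar>blinfun_apply g y\<bar>" using S0 gy by simp
      show "norm (blinfun_apply u x) \<le> bilinear_norm B / \<bar>blinfun_apply g y\<bar>" if "norm x \<le> 1" for x
        using bilinear_norm_ge[OF bil that y] gy by (simp add: B_def abs_mult pos_le_divide_eq)
    qed
    then show ?thesis using gy by (simp add: pos_le_divide_eq mult.commute)
  qed (use S0 in simp)
  show "norm u * norm g \<le> bilinear_norm B"
  proof (cases "norm u = 0")
    case False
    then have nu: "0 < norm u" by simp
    have "norm g \<le> bilinear_norm B / norm u"
    proof (rule norm_blinfun_unit_ball_bound)
      show "0 \<le> bilinear_norm B / norm u" using S0 nu by simp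
      show "norm (blinfun_apply g y) \<le> bilinear_norm B / norm u" if "norm y \<le> 1" for y
        using bound[OF that] nu by (simp add: pos_le_divide_eq mult.commute)
    qed
    then show ?thesis using nu by (simp add: pos_le_divide_eq mult.commute)
  qed (use S0 in simp)
qed

lemma is_proj_tensorD:
  assumes "is_proj_tensor tp"
  shows proj_tensor_bounded_bilinear: "bounded_bilinear tp"
    and proj_tensor_norm_le: "norm (tp x y) \<le> norm x * norm y"
    and proj_tensor_dense: "closure (span (range (\<lambda>(x, y). tp x y))) = UNIV"
    and proj_tensor_dual: "bounded_bilinear B \<Longrightarrow>
      \<exists>\<phi>. (\<forall>x y. blinfun_apply \<phi> (tp x y) = B x y) \<and> norm \<phi> = bilinear_norm B"
  using assms unfolding is_proj_tensor_def by blast+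

lemma proj_tensor_blinfun_eqI:
  fixes tp :: "'a::real_normed_vector \<Rightarrow> 'b::real_normed_vector \<Rightarrow> 'c::real_normed_vector"
    and \<phi> \<psi> :: "'c \<Rightarrow>\<^sub>L 'd::real_normed_vector"
  assumes tp: "is_proj_tensor tp"
    and eq: "\<And>x y. blinfun_apply \<phi> (tp x y) = blinfun_apply \<psi> (tp x y)"
  shows "\<phi> = \<psi>"
proof -
  have lin: "linear (blinfun_apply f)" for f :: "'c \<Rightarrow>\<^sub>L 'd"
    by (simp add: blinfun.bounded_linear_right bounded_linear.linear)
  have "blinfun_apply \<phi> w = blinfun_apply \<psi> w" if "w \<in> span (range (\<lambda>(x, y). tp x y))" for w
    by (rule linear_eq_on_span[OF lin[of \<phi>] lin[of \<psi>] _ that]) (use eq in auto)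
  then have "span (range (\<lambda>(x, y). tp x y)) \<subseteq> {w. blinfun_apply \<phi> w = blinfun_apply \<psi> w}"
    by blast
  moreover have "closed {w. blinfun_apply \<phi> w = blinfun_apply \<psi> w}"
    by (intro closed_Collect_eq continuous_intros)
  ultimately have "UNIV \<subseteq> {w. blinfun_apply \<phi> w = blinfun_apply \<psi> w}"
    using closure_minimal proj_tensor_dense[OF tp] by metis
  then show ?thesis by (auto intro: blinfun_eqI)
qed

lemma proj_tensor_product_functional:
  fixes u :: "'a::real_normed_vector \<Rightarrow>\<^sub>L real" and g :: "'b::real_normed_vector \<Rightarrow>\<^sub>L real"
    and tp :: "'a \<Rightarrow> 'b \<Rightarrow> 'c::real_normed_vector"
  assumes "is_proj_tensor tp"
  obtains \<Phi> :: "'c \<Rightarrow>\<^sub>L real"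
  where "\<And>x y. blinfun_apply \<Phi> (tp x y) = blinfun_apply u x * blinfun_apply g y" "norm \<Phi> = norm u * norm g"
  using proj_tensor_dual[OF assms bounded_bilinear.comp[OF bounded_bilinear_mult
        blinfun.bounded_linear_right blinfun.bounded_linear_right, of u g]]
    bilinear_norm_product[of u g] by auto

definition tensor_ball :: "('a::real_normed_vector \<Rightarrow> 'b::real_normed_vector \<Rightarrow> 'c) \<Rightarrow> 'c set" where
  "tensor_ball tp = {tp x y | x y. norm x \<le> 1 \<and> norm y \<le> 1}"

lemma tensor_ball_subset_cball:
  assumes "\<And>x y. norm (tp x y) \<le> norm x * norm y"
  shows "tensor_ball tp \<subseteq> cball 0 1"
proof
  fix w assume "w \<in> tensor_ball tp"
  then obtain x y where "w = tp x y" "norm x \<le> 1" "norm y \<le> 1"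
    unfolding tensor_ball_def by blast
  moreover from this have "norm x * norm y \<le> 1" by (simp add: mult_le_one)
  ultimately show "w \<in> cball 0 1" using assms[of x y] by simp
qed

text \<open>Otherwise a functional separates z from the hull; composed with tp it is a bilinear form
  of norm at most 1, hence comes from a functional of norm at most 1 that agrees with it on
  the dense span of the tensors, contradicting the value at z.\<close>

lemma proj_tensor_ball_hull_dense:
  fixes tp :: "'a::real_normed_vector \<Rightarrow> 'b::real_normed_vector \<Rightarrow> 'c::real_normed_vector"
  assumes tp: "is_proj_tensor tp" and z: "norm z \<le> 1" and r: "0 < r"
  shows "\<exists>k \<in> convex hull tensor_ball tp. norm (z - k) < r"
proof (rule ccontr)
  assume "\<not> ?thesis"
  then have far: "\<And>k. k \<in> convex hull tensor_ball tp \<Longrightarrow> r \<le> norm (z - k)"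
    by (meson not_le)
  interpret tp: bounded_bilinear tp by (rule proj_tensor_bounded_bilinear[OF tp])
  have "0 \<in> tensor_ball tp"
    unfolding tensor_ball_def by (rule CollectI, rule exI[of _ 0], rule exI[of _ 0]) (simp add: tp.zero_left)
  then have K0: "0 \<in> convex hull tensor_ball tp" by (rule hull_inc)
  have ball: "convex hull tensor_ball tp \<subseteq> cball 0 1"
    using tensor_ball_subset_cball[OF proj_tensor_norm_le[OF tp]] by (simp add: hull_minimal)
  obtain f :: "'c \<Rightarrow>\<^sub>L real" where f: "\<And>k. k \<in> convex hull tensor_ball tp \<Longrightarrow> blinfun_apply f k \<le> 1"
    "1 < blinfun_apply f z"
    using separation_from_far_convex[OF convex_convex_hull K0 ball far r] by blast
  let ?B = "\<lambda>x y. blinfun_apply f (tp x y)"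
  have bil: "bounded_bilinear ?B"
    by (rule bounded_linear_compose_bilinear[OF blinfun.bounded_linear_right tp.bounded_bilinear_axioms])
  have "\<bar>?B x y\<bar> \<le> 1" if "norm x \<le> 1" "norm y \<le> 1" for x y
  proof -
    have "tp x' y \<in> tensor_ball tp" if "norm x' \<le> 1" for x'
      using that \<open>norm y \<le> 1\<close> unfolding tensor_ball_def by blast
    then have "tp x y \<in> tensor_ball tp" "tp (- x) y \<in> tensor_ball tp"
      using \<open>norm x \<le> 1\<close> by auto
    then have "?B x y \<le> 1" "?B (- x) y \<le> 1"
      using f(1)[OF hull_inc] by auto
    then show ?thesis by (simp add: tp.minus_left blinfun.minus_right)
  qed
  then have "bilinear_norm ?B \<le> 1" by (rule bilinear_norm_le)
  moreover obtain \<phi> where \<phi>: "\<And>x y. blinfun_apply \<phi> (tp x y) = ?B x y" "norm \<phi> = bilinear_norm ?B"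
    using proj_tensor_dual[OF tp bil] by blast
  moreover have "\<phi> = f" using proj_tensor_blinfun_eqI[OF tp \<phi>(1)] .
  ultimately show False
    using f(2) blinfun_le_norm[OF z, of f] by simp
qed

section \<open>Slices of tensor functionals\<close>

text \<open>Replacing (x, y) by (- x, - y) does not change the tensor, so all first factors can be
  taken in the half-space where u is nonnegative.\<close>

lemma convex_hull_tensor_ball_obtain:
  fixes tp :: "'a::real_normed_vector \<Rightarrow> 'b::real_normed_vector \<Rightarrow> 'c::real_normed_vector"
    and u :: "'a \<Rightarrow>\<^sub>L real"
  assumes tp: "bounded_bilinear tp" and k: "k \<in> convex hull tensor_ball tp"
  obtains V :: "'c set" and \<mu> xf yf where "finite V" "\<And>v. v \<in> V \<Longrightarrow> 0 \<le> \<mu> v" "sum \<mu> V = 1"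
    "k = (\<Sum>v\<in>V. \<mu> v *\<^sub>R tp (xf v) (yf v))"
    "\<And>v. v \<in> V \<Longrightarrow> norm (xf v) \<le> 1 \<and> norm (yf v) \<le> 1 \<and> 0 \<le> blinfun_apply u (xf v)"
proof -
  interpret tp: bounded_bilinear tp by (rule tp)
  obtain V \<mu> where V: "finite V" "V \<subseteq> tensor_ball tp" "\<forall>v\<in>V. 0 \<le> \<mu> v" "sum \<mu> V = 1"
    "(\<Sum>v\<in>V. \<mu> v *\<^sub>R v) = k"
    using k unfolding convex_hull_explicit by blast
  have "\<exists>x y. v = tp x y \<and> norm x \<le> 1 \<and> norm y \<le> 1 \<and> 0 \<le> blinfun_apply u x" if v: "v \<in> V" for v
  proof -
    obtain x y where xy: "v = tp x y" "norm x \<le> 1" "norm y \<le> 1"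
      using V(2) v unfolding tensor_ball_def by blast
    show ?thesis
    proof (cases "0 \<le> blinfun_apply u x")
      case False
      then show ?thesis
        using xy by (intro exI[of _ "- x"] exI[of _ "- y"]) (simp add: tp.minus_left tp.minus_right blinfun.minus_right)
    qed (use xy in blast)
  qed
  then obtain xf yf where xy: "\<And>v. v \<in> V \<Longrightarrow> v = tp (xf v) (yf v) \<and> norm (xf v) \<le> 1 \<and> norm (yf v) \<le> 1 \<and> 0 \<le> blinfun_apply u (xf v)"
    by metis
  have "k = (\<Sum>v\<in>V. \<mu> v *\<^sub>R tp (xf v) (yf v))"
    using V(5) xy by (auto intro!: sum.cong)
  then show ?thesis
    using that V xy by blast
qed

lemma mult_le_one_minus:
  fixes a b \<kappa> :: real
  assumes "0 \<le> a" "a \<le> 1" "b \<le> 1" "a \<le> 1 - \<beta> \<or> b \<le> 1 - \<alpha>" "\<kappa> \<le> \<beta>" "\<kappa> \<le> \<alpha>" "\<kappa> \<le> 1"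
  shows "a * b \<le> 1 - \<kappa>"
proof (cases "b \<le> 0")
  case True
  then show ?thesis using assms mult_nonneg_nonpos[of a b] by linarith
next
  case False
  have "a * b \<le> a" "a * b \<le> b"
    using assms False mult_left_le[of b a] mult_right_le_one_le[of b a] by auto
  then show ?thesis using assms by linarith
qed

text \<open>Markov's inequality for the defect 1 - p.\<close>

lemma sum_weight_defect_lt:
  fixes \<mu> p :: "'v \<Rightarrow> real"
  assumes "finite V" "G \<subseteq> V" "\<And>v. v \<in> V \<Longrightarrow> 0 \<le> \<mu> v" "sum \<mu> V = 1"
    and "\<And>v. v \<in> V \<Longrightarrow> p v \<le> 1" "\<And>v. v \<in> V - G \<Longrightarrow> p v \<le> 1 - \<kappa>" "0 < \<kappa>"
    and "1 - d < (\<Sum>v\<in>V. \<mu> v * p v)"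
  shows "sum \<mu> (V - G) < d / \<kappa>"
proof -
  have fin: "finite G" "finite (V - G)" using assms(1,2) finite_subset by auto
  have split: "sum f V = sum f G + sum f (V - G)" for f :: "'v \<Rightarrow> real"
    using sum.union_disjoint[OF fin, of f] assms(2) by (simp add: Un_absorb1)
  have "(\<Sum>v\<in>V. \<mu> v * p v) \<le> (\<Sum>v\<in>G. \<mu> v) + (\<Sum>v\<in>V - G. \<mu> v * (1 - \<kappa>))"
    unfolding split[of "\<lambda>v. \<mu> v * p v"] using assms(2,3,5,6)
    by (intro add_mono sum_mono) (auto intro: mult_left_le mult_left_mono)
  also have "\<dots> = sum \<mu> G + sum \<mu> (V - G) * (1 - \<kappa>)"
    by (simp add: sum_distrib_right)
  also have "\<dots> = 1 - \<kappa> * sum \<mu> (V - G)"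
    using assms(4) split[of \<mu>] by (simp add: algebra_simps)
  finally show ?thesis using assms(7,8) by (simp add: pos_less_divide_eq mult.commute)
qed

lemma norm_sum_scaleR_le:
  assumes "\<And>i. i \<in> A \<Longrightarrow> 0 \<le> \<mu> i" "\<And>i. i \<in> A \<Longrightarrow> norm (f i) \<le> b"
  shows "norm (\<Sum>i\<in>A. \<mu> i *\<^sub>R f i) \<le> sum \<mu> A * b"
proof -
  have "norm (\<Sum>i\<in>A. \<mu> i *\<^sub>R f i) \<le> (\<Sum>i\<in>A. \<mu> i * b)"
    using assms by (intro order_trans[OF norm_sum] sum_mono) (simp add: mult_left_mono)
  then show ?thesis by (simp add: sum_distrib_right)
qed

lemma tensor_average_split:
  fixes tp :: "'a::real_normed_vector \<Rightarrow> 'b::real_normed_vector \<Rightarrow> 'c::real_normed_vector"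
    and \<mu> :: "'v \<Rightarrow> real" and xf :: "'v \<Rightarrow> 'a" and yf :: "'v \<Rightarrow> 'b"
  assumes tp: "bounded_bilinear tp" and V: "finite V" "G \<subseteq> V" and S: "sum \<mu> G \<noteq> 0"
  defines "y' \<equiv> (\<Sum>v\<in>G. (\<mu> v / sum \<mu> G) *\<^sub>R yf v)"
  shows "(\<Sum>v\<in>V. \<mu> v *\<^sub>R tp (xf v) (yf v)) - tp x0 y'
    = (\<Sum>v\<in>V - G. \<mu> v *\<^sub>R tp (xf v) (yf v)) + (\<Sum>v\<in>G. \<mu> v *\<^sub>R tp (xf v - x0) (yf v))
      + (sum \<mu> G - 1) *\<^sub>R tp x0 y'"
proof -
  interpret tp: bounded_bilinear tp by (rule tp)
  have "sum \<mu> G *\<^sub>R y' = (\<Sum>v\<in>G. \<mu> v *\<^sub>R yf v)"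
    using S by (simp add: y'_def scaleR_sum_right)
  then have "sum \<mu> G *\<^sub>R tp x0 y' = (\<Sum>v\<in>G. \<mu> v *\<^sub>R tp x0 (yf v))"
    by (metis (no_types, lifting) sum.cong tp.scaleR_right tp.sum_right)
  then have "(\<Sum>v\<in>G. \<mu> v *\<^sub>R tp (xf v - x0) (yf v))
      = (\<Sum>v\<in>G. \<mu> v *\<^sub>R tp (xf v) (yf v)) - sum \<mu> G *\<^sub>R tp x0 y'"
    by (simp add: tp.diff_left scaleR_diff_right sum_subtractf)
  moreover have "(\<Sum>v\<in>V. \<mu> v *\<^sub>R tp (xf v) (yf v))
      = (\<Sum>v\<in>V - G. \<mu> v *\<^sub>R tp (xf v) (yf v)) + (\<Sum>v\<in>G. \<mu> v *\<^sub>R tp (xf v) (yf v))"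
    using sum.subset_diff[OF V(2,1)] by simp
  ultimately show ?thesis by (simp add: scaleR_diff_left)
qed

text \<open>The first factors indexed by G are within \<epsilon> of x0, and the rest carries weight 1 - sum \<mu> G;
  moving that weight costs it twice, once when dropping those tensors and once when rescaling the
  remaining average.\<close>

lemma tensor_average_approx:
  fixes tp :: "'a::real_normed_vector \<Rightarrow> 'b::real_normed_vector \<Rightarrow> 'c::real_normed_vector"
  assumes tp: "bounded_bilinear tp" and tp_norm: "\<And>x y. norm (tp x y) \<le> norm x * norm y"
    and V: "finite V" "G \<subseteq> V" "\<And>v. v \<in> V \<Longrightarrow> 0 \<le> \<mu> v" "sum \<mu> V = 1" "0 < sum \<mu> G"
    and xy: "\<And>v. v \<in> V \<Longrightarrow> norm (xf v) \<le> 1 \<and> norm (yf v) \<le> 1"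
    and x0: "norm x0 \<le> 1" and close: "\<And>v. v \<in> G \<Longrightarrow> norm (xf v - x0) \<le> \<epsilon>" and "0 \<le> \<epsilon>"
  shows "norm ((\<Sum>v\<in>V. \<mu> v *\<^sub>R tp (xf v) (yf v)) - tp x0 (\<Sum>v\<in>G. (\<mu> v / sum \<mu> G) *\<^sub>R yf v))
    \<le> 2 * (1 - sum \<mu> G) + \<epsilon>"
proof -
  define S where "S = sum \<mu> G"
  define y' where "y' = (\<Sum>v\<in>G. (\<mu> v / S) *\<^sub>R yf v)"
  have tp_le: "norm (tp x y) \<le> b" if "norm x \<le> b" "norm y \<le> 1" "0 \<le> b" for x y b
    using tp_norm[of x y] mult_mono[OF that(1,2)] that(3) by simp
  have finG: "finite G" using V(1,2) finite_subset by blast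
  have "y' \<in> cball 0 1"
    unfolding y'_def using V xy finG
    by (intro convex_sum[OF finG convex_cball]) (auto simp: S_def sum_divide_distrib[symmetric])
  then have "norm (tp x0 y') \<le> 1" using tp_le[OF x0] by simp
  have "sum \<mu> (V - G) = 1 - S"
    using sum_diff[OF V(1,2), of \<mu>] V(4) by (simp add: S_def)
  moreover from this have "S \<le> 1" using sum_nonneg[of "V - G" \<mu>] V(3) by auto
  ultimately have "norm (\<Sum>v\<in>V - G. \<mu> v *\<^sub>R tp (xf v) (yf v)) \<le> 1 - S"
    and "norm ((S - 1) *\<^sub>R tp x0 y') \<le> 1 - S"
    using norm_sum_scaleR_le[of "V - G" \<mu> "\<lambda>v. tp (xf v) (yf v)" 1] V(3) xy tp_le
      \<open>norm (tp x0 y') \<le> 1\<close> mult_left_le[of "norm (tp x0 y')" "1 - S"] by auto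
  moreover have "norm (\<Sum>v\<in>G. \<mu> v *\<^sub>R tp (xf v - x0) (yf v)) \<le> S * \<epsilon>"
    unfolding S_def using V(2,3) xy close tp_le \<open>0 \<le> \<epsilon>\<close>
    by (intro norm_sum_scaleR_le) auto
  moreover have "S * \<epsilon> \<le> \<epsilon>"
    using \<open>S \<le> 1\<close> \<open>0 \<le> \<epsilon>\<close> mult_right_mono[of S 1 \<epsilon>] by simp
  moreover have "norm ((\<Sum>v\<in>V - G. \<mu> v *\<^sub>R tp (xf v) (yf v)) + (\<Sum>v\<in>G. \<mu> v *\<^sub>R tp (xf v - x0) (yf v)))
      \<le> norm (\<Sum>v\<in>V - G. \<mu> v *\<^sub>R tp (xf v) (yf v)) + norm (\<Sum>v\<in>G. \<mu> v *\<^sub>R tp (xf v - x0) (yf v))"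
    by (rule norm_triangle_ineq)
  ultimately show ?thesis
    unfolding tensor_average_split[OF tp V(1,2), of \<mu>, OF order.strict_implies_not_eq[OF V(5), symmetric]]
    unfolding y'_def[symmetric] S_def[symmetric]
    by (intro norm_triangle_le) argo
qed

lemma tensor_slice_weight:
  fixes tp :: "'a::real_normed_vector \<Rightarrow> 'b::real_normed_vector \<Rightarrow> 'c::real_normed_vector"
    and u :: "'a \<Rightarrow>\<^sub>L real" and g :: "'b \<Rightarrow>\<^sub>L real" and \<Phi> :: "'c \<Rightarrow>\<^sub>L real"
  assumes \<Phi>: "\<And>x y. blinfun_apply \<Phi> (tp x y) = blinfun_apply u x * blinfun_apply g y"
    and u: "norm u \<le> 1" and g: "norm g \<le> 1"
    and V: "finite V" "\<And>v. v \<in> V \<Longrightarrow> 0 \<le> \<mu> v" "sum \<mu> V = 1"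
    and xy: "\<And>v. v \<in> V \<Longrightarrow> norm (xf v) \<le> 1 \<and> norm (yf v) \<le> 1 \<and> 0 \<le> blinfun_apply u (xf v)"
    and \<kappa>: "0 < \<kappa>" "\<kappa> \<le> \<beta>" "\<kappa> \<le> \<alpha>" "\<kappa> \<le> 1"
    and large: "1 - d < blinfun_apply \<Phi> (\<Sum>v\<in>V. \<mu> v *\<^sub>R tp (xf v) (yf v))"
  shows "1 - d / \<kappa> < sum \<mu> {v \<in> V. xf v \<in> slice u \<beta> \<and> yf v \<in> slice g \<alpha>}"
proof -
  define G where "G = {v \<in> V. xf v \<in> slice u \<beta> \<and> yf v \<in> slice g \<alpha>}"
  define p where "p v = blinfun_apply u (xf v) * blinfun_apply g (yf v)" for v
  have le1: "blinfun_apply u (xf v) \<le> 1" "blinfun_apply g (yf v) \<le> 1" if "v \<in> V" for v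
    using xy[OF that] blinfun_le_norm[of "xf v" u] blinfun_le_norm[of "yf v" g] u g by auto
  have "1 - d < (\<Sum>v\<in>V. \<mu> v * p v)"
    using large by (simp add: blinfun.sum_right blinfun.scaleR_right \<Phi> p_def)
  moreover have "p v \<le> 1 - \<kappa>" if "v \<in> V - G" for v
    using that xy le1 \<kappa> unfolding p_def G_def slice_def
    by (intro mult_le_one_minus[of _ _ \<beta> \<alpha>]) auto
  moreover have "p v \<le> 1" if "v \<in> V" for v
    using that xy le1 mult_le_one_minus[of "blinfun_apply u (xf v)" "blinfun_apply g (yf v)" 0 0 0]
    unfolding p_def by simp
  ultimately have "sum \<mu> (V - G) < d / \<kappa>"
    using V \<kappa>(1) by (intro sum_weight_defect_lt) (auto simp: G_def)
  moreover have "sum \<mu> (V - G) = 1 - sum \<mu> G"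
    using sum_diff[OF V(1), of G \<mu>] V(3) by (auto simp: G_def)
  ultimately show ?thesis unfolding G_def by linarith
qed

text \<open>Most of the weight of a tensor approximation of z sits on tensors whose first factor is in
  the thin slice of u (hence close to x0) and whose second factor is in the slice of g; averaging
  those second factors gives y.\<close>

lemma tensor_slice_approx:
  fixes tp :: "'a::real_normed_vector \<Rightarrow> 'b::real_normed_vector \<Rightarrow> 'c::real_normed_vector"
    and u :: "'a \<Rightarrow>\<^sub>L real" and g :: "'b \<Rightarrow>\<^sub>L real" and \<Phi> :: "'c \<Rightarrow>\<^sub>L real"
  assumes tp: "is_proj_tensor tp"
    and u: "norm u \<le> 1" and g: "norm g \<le> 1"
    and \<Phi>: "\<And>x y. blinfun_apply \<Phi> (tp x y) = blinfun_apply u x * blinfun_apply g y" "norm \<Phi> \<le> 1"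
    and x0: "x0 \<in> slice u \<beta>"
    and thin: "\<And>x1 x2. x1 \<in> slice u \<beta> \<Longrightarrow> x2 \<in> slice u \<beta> \<Longrightarrow> norm (x1 - x2) \<le> \<epsilon>"
    and \<kappa>: "0 < \<kappa>" "\<kappa> \<le> \<beta>" "\<kappa> \<le> \<alpha>" "\<kappa> \<le> 1"
    and z: "z \<in> slice \<Phi> \<gamma>" and \<eta>: "0 < \<eta>" "\<gamma> + \<eta> < \<kappa>" and "0 \<le> \<epsilon>"
  obtains y where "y \<in> slice g \<alpha>" "norm (z - tp x0 y) \<le> \<eta> + 2 * ((\<gamma> + \<eta>) / \<kappa>) + \<epsilon>"
proof -
  interpret tp: bounded_bilinear tp by (rule proj_tensor_bounded_bilinear[OF tp])
  obtain k where k: "k \<in> convex hull tensor_ball tp" "norm (z - k) < \<eta>"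
    using proj_tensor_ball_hull_dense[OF tp _ \<eta>(1)] z unfolding slice_def by blast
  obtain V :: "'c set" and \<mu> xf yf where V: "finite V" "\<And>v. v \<in> V \<Longrightarrow> 0 \<le> \<mu> v" "sum \<mu> V = 1"
    and k_eq: "k = (\<Sum>v\<in>V. \<mu> v *\<^sub>R tp (xf v) (yf v))"
    and xy: "\<And>v. v \<in> V \<Longrightarrow> norm (xf v) \<le> 1 \<and> norm (yf v) \<le> 1 \<and> 0 \<le> blinfun_apply u (xf v)"
    using convex_hull_tensor_ball_obtain[OF tp.bounded_bilinear_axioms k(1), of u] by blast
  define G where "G = {v \<in> V. xf v \<in> slice u \<beta> \<and> yf v \<in> slice g \<alpha>}"
  have "norm \<Phi> * norm (z - k) \<le> norm (z - k)"
    using \<Phi>(2) mult_right_mono[of "norm \<Phi>" 1 "norm (z - k)"] by simp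
  then have large: "1 - (\<gamma> + \<eta>) < blinfun_apply \<Phi> (\<Sum>v\<in>V. \<mu> v *\<^sub>R tp (xf v) (yf v))"
    using z k(2) blinfun_diff_le[of \<Phi> z k] unfolding slice_def k_eq by simp
  have "1 - (\<gamma> + \<eta>) / \<kappa> < sum \<mu> G"
    unfolding G_def by (rule tensor_slice_weight[OF \<Phi>(1) u g V(1) _ V(3) _ \<kappa> large]) (use V(2) xy in auto)
  moreover have "(\<gamma> + \<eta>) / \<kappa> < 1" using \<eta> \<kappa>(1) by simp
  ultimately have S: "0 < sum \<mu> G" "1 - sum \<mu> G < (\<gamma> + \<eta>) / \<kappa>" by linarith+
  define y where "y = (\<Sum>v\<in>G. (\<mu> v / sum \<mu> G) *\<^sub>R yf v)"
  have "finite G" using V(1) by (simp add: G_def)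
  then have "y \<in> slice g \<alpha>"
    unfolding y_def using S(1) V(2)
    by (intro convex_sum[OF _ convex_slice]) (auto simp: G_def sum_divide_distrib[symmetric])
  moreover have "norm (k - tp x0 y) \<le> 2 * (1 - sum \<mu> G) + \<epsilon>"
    unfolding k_eq y_def
  proof (rule tensor_average_approx[OF tp.bounded_bilinear_axioms proj_tensor_norm_le[OF tp] V(1) _ V(2,3) S(1)])
    show "G \<subseteq> V" "\<And>v. v \<in> V \<Longrightarrow> norm (xf v) \<le> 1 \<and> norm (yf v) \<le> 1" "norm x0 \<le> 1" "0 \<le> \<epsilon>"
      using xy x0 \<open>0 \<le> \<epsilon>\<close> by (auto simp: G_def slice_def)
    show "\<And>v. v \<in> G \<Longrightarrow> norm (xf v - x0) \<le> \<epsilon>"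
      using thin x0 by (auto simp: G_def)
  qed
  moreover have "norm (z - tp x0 y) \<le> norm (z - k) + norm (k - tp x0 y)"
    using norm_triangle_ineq[of "z - k" "k - tp x0 y"] by simp
  ultimately show ?thesis
    using that k(2) S(2) by (smt (verit))
qed

section \<open>Convex combinations of slices\<close>

definition minkowski_comb :: "nat \<Rightarrow> (nat \<Rightarrow> real) \<Rightarrow> (nat \<Rightarrow> 'a::real_vector set) \<Rightarrow> 'a set" where
  "minkowski_comb n lam S = {(\<Sum>i<n. lam i *\<^sub>R x i) | x. \<forall>i<n. x i \<in> S i}"

lemma SD2P_iff:
  "SD2P TYPE('a::real_normed_vector) \<longleftrightarrow>
    (\<forall>n lam (f :: nat \<Rightarrow> 'a \<Rightarrow>\<^sub>L real) \<alpha>.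
      (\<forall>i<n. 0 \<le> lam i) \<and> (\<Sum>i<n. lam i) = 1 \<and> (\<forall>i<n. norm (f i) = 1 \<and> 0 < \<alpha> i \<and> \<alpha> i < 1) \<longrightarrow>
      diameter (minkowski_comb n lam (\<lambda>i. slice (f i) (\<alpha> i))) = 2)"
  unfolding SD2P_def minkowski_comb_def ..

lemma minkowski_comb_subset_cball:
  fixes S :: "nat \<Rightarrow> 'a::real_normed_vector set"
  assumes "\<forall>i<n. 0 \<le> lam i" "(\<Sum>i<n. lam i) = 1" "\<And>i. i < n \<Longrightarrow> S i \<subseteq> cball 0 1"
  shows "minkowski_comb n lam S \<subseteq> cball 0 1"
proof
  fix a assume "a \<in> minkowski_comb n lam S"
  then obtain x where "a = (\<Sum>i<n. lam i *\<^sub>R x i)" "\<forall>i<n. x i \<in> S i"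
    unfolding minkowski_comb_def by blast
  moreover from this have "norm (x i) \<le> 1" if "i < n" for i
    using assms(3) that by (meson mem_cball_0 subsetD)
  ultimately show "a \<in> cball 0 1"
    using norm_sum_scaleR_le[of "{..<n}" lam x 1] assms(1,2) by simp
qed

lemma minkowski_comb_approx:
  assumes L: "linear L" and lam: "\<forall>i<n. 0 \<le> lam i" "(\<Sum>i<n. lam i) = 1"
    and approx: "\<And>i w. i < n \<Longrightarrow> w \<in> S i \<Longrightarrow> \<exists>y\<in>T i. norm (w - L y) \<le> E"
    and a: "a \<in> minkowski_comb n lam S"
  shows "\<exists>a'\<in>minkowski_comb n lam T. norm (a - L a') \<le> E"
proof -
  obtain x where x: "a = (\<Sum>i<n. lam i *\<^sub>R x i)" "\<forall>i<n. x i \<in> S i"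
    using a unfolding minkowski_comb_def by blast
  then have "\<forall>i\<in>{..<n}. \<exists>y. y \<in> T i \<and> norm (x i - L y) \<le> E"
    using approx by blast
  then have "\<exists>y. \<forall>i\<in>{..<n}. y i \<in> T i \<and> norm (x i - L (y i)) \<le> E"
    by (rule bchoice)
  then obtain y where y: "\<And>i. i < n \<Longrightarrow> y i \<in> T i \<and> norm (x i - L (y i)) \<le> E"
    by auto
  have "a - L (\<Sum>i<n. lam i *\<^sub>R y i) = (\<Sum>i<n. lam i *\<^sub>R (x i - L (y i)))"
    unfolding x(1) by (simp add: linear_sum[OF L] linear_scale[OF L] scaleR_diff_right sum_subtractf)
  then have "norm (a - L (\<Sum>i<n. lam i *\<^sub>R y i)) \<le> E"
    using norm_sum_scaleR_le[of "{..<n}" lam "\<lambda>i. x i - L (y i)" E] lam y by simp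
  moreover have "(\<Sum>i<n. lam i *\<^sub>R y i) \<in> minkowski_comb n lam T"
    unfolding minkowski_comb_def using y by blast
  ultimately show ?thesis by blast
qed

lemma diameter_eq_2I:
  fixes C :: "'a::real_normed_vector set"
  assumes C: "C \<subseteq> cball 0 1" and far: "\<And>\<delta>. 0 < \<delta> \<Longrightarrow> \<delta> \<le> 1 \<Longrightarrow> \<exists>a\<in>C. \<exists>b\<in>C. 2 - \<delta> < dist a b"
  shows "diameter C = 2"
proof (rule antisym)
  have bounded: "bounded C" using C bounded_cball bounded_subset by blast
  show "diameter C \<le> 2"
  proof (rule diameter_le)
    show "norm (a - b) \<le> 2" if "a \<in> C" "b \<in> C" for a b
    proof -
      have "norm a \<le> 1" "norm b \<le> 1" using that C by auto
      then show ?thesis using norm_triangle_ineq4[of a b] by simp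
    qed
  qed simp
  show "2 \<le> diameter C"
  proof (rule ccontr)
    assume "\<not> 2 \<le> diameter C"
    then obtain a b where "a \<in> C" "b \<in> C" "2 - min 1 (2 - diameter C) < dist a b"
      using far[of "min 1 (2 - diameter C)"] by auto
    then show False
      using diameter_bounded_bound[OF bounded, of a b] by linarith
  qed
qed

lemma SD2P_far_points:
  fixes f :: "nat \<Rightarrow> 'a::real_normed_vector \<Rightarrow>\<^sub>L real"
  assumes "SD2P TYPE('a)" and lam: "\<forall>i<n. 0 \<le> lam i" "(\<Sum>i<n. lam i) = 1"
    and "\<forall>i<n. norm (f i) = 1 \<and> 0 < \<alpha> i \<and> \<alpha> i < 1" and "0 < d" "d < 2"
  shows "\<exists>a\<in>minkowski_comb n lam (\<lambda>i. slice (f i) (\<alpha> i)).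
    \<exists>b\<in>minkowski_comb n lam (\<lambda>i. slice (f i) (\<alpha> i)). 2 - d < dist a b"
proof (rule diameter_lower_bounded)
  show "bounded (minkowski_comb n lam (\<lambda>i. slice (f i) (\<alpha> i)))"
    by (rule bounded_subset[OF bounded_cball minkowski_comb_subset_cball[OF lam slice_subset_cball]])
  show "2 - d < diameter (minkowski_comb n lam (\<lambda>i. slice (f i) (\<alpha> i)))"
    using assms unfolding SD2P_iff by simp
qed (use assms in simp)

lemma positive_lower_bound:
  fixes \<alpha> :: "nat \<Rightarrow> real"
  assumes "0 < \<beta>" "\<And>i. i < n \<Longrightarrow> 0 < \<alpha> i"
  obtains \<kappa> where "0 < \<kappa>" "\<kappa> \<le> \<beta>" "\<And>i. i < n \<Longrightarrow> \<kappa> \<le> \<alpha> i"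
proof
  let ?\<kappa> = "Min (insert \<beta> (\<alpha> ` {..<n}))"
  show "0 < ?\<kappa>" "?\<kappa> \<le> \<beta>" using assms by auto
  show "?\<kappa> \<le> \<alpha> i" if "i < n" for i using that by auto
qed

lemma non_rough_dual_thin_slice:
  assumes "non_rough TYPE('a \<Rightarrow>\<^sub>L real)" "0 < \<epsilon>"
  obtains u :: "'a::real_normed_vector \<Rightarrow>\<^sub>L real" and \<beta> where "norm u = 1" "0 < \<beta>"
    "\<And>x1 x2. x1 \<in> slice u \<beta> \<Longrightarrow> x2 \<in> slice u \<beta> \<Longrightarrow> norm (x1 - x2) \<le> \<epsilon>"
proof -
  obtain u :: "'a \<Rightarrow>\<^sub>L real" where u: "norm u = 1" "eta u < ereal (\<epsilon> / 2)"
    using assms unfolding non_rough_def by (metis half_gt_zero not_le)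
  obtain \<beta> where "0 < \<beta>"
    and thin: "\<And>x1 x2. x1 \<in> slice u \<beta> \<Longrightarrow> x2 \<in> slice u \<beta> \<Longrightarrow> norm (x1 - x2) < 2 * (\<epsilon> / 2)"
    using thin_slice_of_eta_less[OF u(2)] \<open>0 < \<epsilon>\<close> by auto
  show ?thesis
  proof (rule that[OF u(1) \<open>0 < \<beta>\<close>])
    show "norm (x1 - x2) \<le> \<epsilon>" if "x1 \<in> slice u \<beta>" "x2 \<in> slice u \<beta>" for x1 x2
      using thin[OF that] by simp
  qed
qed

lemma proj_tensor_product_functionals:
  fixes tp :: "'a::real_normed_vector \<Rightarrow> 'b::real_normed_vector \<Rightarrow> 'c::real_normed_vector"
    and u :: "'a \<Rightarrow>\<^sub>L real" and g :: "nat \<Rightarrow> 'b \<Rightarrow>\<^sub>L real"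
  assumes "is_proj_tensor tp"
  obtains \<Phi> :: "nat \<Rightarrow> 'c \<Rightarrow>\<^sub>L real"
  where "\<And>i x y. blinfun_apply (\<Phi> i) (tp x y) = blinfun_apply u x * blinfun_apply (g i) y"
    "\<And>i. norm (\<Phi> i) = norm u * norm (g i)"
proof -
  have "\<forall>i. \<exists>\<Phi> :: 'c \<Rightarrow>\<^sub>L real.
      (\<forall>x y. blinfun_apply \<Phi> (tp x y) = blinfun_apply u x * blinfun_apply (g i) y) \<and> norm \<Phi> = norm u * norm (g i)"
    using proj_tensor_product_functional[OF assms] by blast
  then have "\<exists>\<Phi> :: nat \<Rightarrow> 'c \<Rightarrow>\<^sub>L real. \<forall>i.
      (\<forall>x y. blinfun_apply (\<Phi> i) (tp x y) = blinfun_apply u x * blinfun_apply (g i) y) \<and> norm (\<Phi> i) = norm u * norm (g i)"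
    by (rule choice)
  then show ?thesis using that by blast
qed

lemma far_points_transfer:
  assumes L: "linear L" "\<And>y. norm (L y) \<le> norm y"
    and ab: "a \<in> D" "b \<in> D" "d < dist a b"
    and approx: "\<And>c. c \<in> D \<Longrightarrow> \<exists>c'\<in>C. norm (c - L c') \<le> E"
  shows "\<exists>a'\<in>C. \<exists>b'\<in>C. d - 2 * E < dist a' b'"
proof -
  obtain a' b' where "a' \<in> C" "b' \<in> C" "norm (a - L a') \<le> E" "norm (b - L b') \<le> E"
    using approx[OF ab(1)] approx[OF ab(2)] by blast
  moreover have "norm (a - b) \<le> norm ((a - L a') - (b - L b')) + norm (L (a' - b'))"
    using norm_triangle_ineq[of "(a - L a') - (b - L b')" "L (a' - b')"] by (simp add: linear_diff[OF L(1)])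
  moreover have "norm ((a - L a') - (b - L b')) \<le> norm (a - L a') + norm (b - L b')"
    by (rule norm_triangle_ineq4)
  ultimately show ?thesis
    using ab(3) L(2)[of "a' - b'"] unfolding dist_norm by (smt (verit))
qed

lemma proj_tensor_far_points:
  fixes tp :: "'x::real_normed_vector \<Rightarrow> 'y::real_normed_vector \<Rightarrow> 'z::real_normed_vector"
    and f :: "nat \<Rightarrow> 'y \<Rightarrow>\<^sub>L real"
  assumes tp: "is_proj_tensor tp" and SD2P_Z: "SD2P TYPE('z)" and non_rough: "non_rough TYPE('x \<Rightarrow>\<^sub>L real)"
    and lam: "\<forall>i<n. 0 \<le> lam i" "(\<Sum>i<n. lam i) = 1"
    and f: "\<And>i. i < n \<Longrightarrow> norm (f i) = 1" and \<alpha>: "\<And>i. i < n \<Longrightarrow> 0 < \<alpha> i"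
    and \<delta>: "0 < \<delta>" "\<delta> \<le> 1"
  defines "C \<equiv> minkowski_comb n lam (\<lambda>i. slice (f i) (\<alpha> i))"
  shows "\<exists>a\<in>C. \<exists>b\<in>C. 2 - \<delta> < dist a b"
proof -
  interpret tp: bounded_bilinear tp by (rule proj_tensor_bounded_bilinear[OF tp])
  obtain u :: "'x \<Rightarrow>\<^sub>L real" and \<beta> where u: "norm u = 1" and "0 < \<beta>"
    and thin: "\<And>x1 x2. x1 \<in> slice u \<beta> \<Longrightarrow> x2 \<in> slice u \<beta> \<Longrightarrow> norm (x1 - x2) \<le> \<delta> / 8"
    using non_rough_dual_thin_slice[OF non_rough, of "\<delta> / 8"] \<delta> by auto
  obtain x0 where x0: "x0 \<in> slice u \<beta>" using slice_nonempty[OF u \<open>0 < \<beta>\<close>] by blast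
  obtain \<kappa> where \<kappa>: "0 < \<kappa>" "\<kappa> \<le> min \<beta> 1" "\<And>i. i < n \<Longrightarrow> \<kappa> \<le> \<alpha> i"
    using positive_lower_bound[of "min \<beta> 1" n \<alpha>] \<open>0 < \<beta>\<close> \<alpha> by auto
  text \<open>With this \<gamma> the weight estimate gives 2 \<gamma> / \<kappa> = \<delta> / 8, and the total loss \<gamma> + 2 E
    stays below \<delta>.\<close>
  define \<gamma> where "\<gamma> = \<kappa> * \<delta> / 16"
  have "0 < \<kappa> * \<delta>" "\<kappa> * \<delta> \<le> \<kappa>" "\<kappa> * \<delta> \<le> \<delta>"
    using \<kappa>(1,2) \<delta> mult_left_le[of \<delta> \<kappa>] mult_left_le_one_le[of \<delta> \<kappa>] by auto
  then have \<gamma>: "0 < \<gamma>" "\<gamma> < 1" "\<gamma> \<le> \<delta> / 16" "\<gamma> + \<gamma> < \<kappa>" "(\<gamma> + \<gamma>) / \<kappa> = \<delta> / 8"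
    using \<kappa>(1,2) by (auto simp: \<gamma>_def)
  obtain \<Phi> :: "nat \<Rightarrow> 'z \<Rightarrow>\<^sub>L real"
    where \<Phi>: "\<And>i x y. blinfun_apply (\<Phi> i) (tp x y) = blinfun_apply u x * blinfun_apply (f i) y"
      and \<Phi>_norm: "\<And>i. norm (\<Phi> i) = norm u * norm (f i)"
    using proj_tensor_product_functionals[OF tp] by blast
  define CZ where "CZ = minkowski_comb n lam (\<lambda>i. slice (\<Phi> i) \<gamma>)"
  have "\<forall>i<n. norm (\<Phi> i) = 1 \<and> 0 < \<gamma> \<and> \<gamma> < 1" using \<Phi>_norm u f \<gamma>(1,2) by simp
  then obtain a b where ab: "a \<in> CZ" "b \<in> CZ" "2 - \<gamma> < dist a b"
    using SD2P_far_points[OF SD2P_Z lam, of \<Phi> "\<lambda>_. \<gamma>" \<gamma>] \<gamma>(1,2) unfolding CZ_def by auto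
  define E where "E = \<gamma> + 2 * ((\<gamma> + \<gamma>) / \<kappa>) + \<delta> / 8"
  have approx: "\<exists>y\<in>slice (f i) (\<alpha> i). norm (w - tp x0 y) \<le> E" if "i < n" "w \<in> slice (\<Phi> i) \<gamma>" for i w
  proof -
    have "norm u \<le> 1" "norm (f i) \<le> 1" "norm (\<Phi> i) \<le> 1" "\<kappa> \<le> \<beta>" "\<kappa> \<le> 1" "0 \<le> \<delta> / 8"
      using u f[OF that(1)] \<Phi>_norm[of i] \<kappa>(2) \<delta>(1) by auto
    then show ?thesis
      using tensor_slice_approx[OF tp _ _ \<Phi> _ x0 thin \<kappa>(1) _ \<kappa>(3)[OF that(1)] _ that(2) \<gamma>(1,4)]
      unfolding E_def by blast
  qed
  have "linear (tp x0)" by (rule bounded_linear.linear[OF tp.bounded_linear_right])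
  moreover have "norm (tp x0 y) \<le> norm y" for y
    using proj_tensor_norm_le[OF tp, of x0 y] x0 mult_right_mono[of "norm x0" 1 "norm y"]
    unfolding slice_def by simp
  moreover have "\<exists>c'\<in>C. norm (c - tp x0 c') \<le> E" if "c \<in> CZ" for c
    unfolding C_def
    by (rule minkowski_comb_approx[OF \<open>linear (tp x0)\<close> lam _ that[unfolded CZ_def]]) (rule approx)
  ultimately have "\<exists>a'\<in>C. \<exists>b'\<in>C. 2 - \<gamma> - 2 * E < dist a' b'"
    by (rule far_points_transfer[OF _ _ ab])
  moreover have "\<gamma> + 2 * E < \<delta>" unfolding E_def using \<gamma>(3,5) \<delta>(1) by simp
  ultimately show ?thesis by force
qed

theorem mainTheorem16:
  fixes tp :: "'x::banach \<Rightarrow> 'y::banach \<Rightarrow> 'z::banach"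
  assumes "is_proj_tensor tp"
    and "SD2P TYPE('z)"
    and "non_rough TYPE('x \<Rightarrow>\<^sub>L real)"
  shows "SD2P TYPE('y)"
  unfolding SD2P_iff
proof (intro allI impI)
  fix n and lam :: "nat \<Rightarrow> real" and f :: "nat \<Rightarrow> 'y \<Rightarrow>\<^sub>L real" and \<alpha> :: "nat \<Rightarrow> real"
  assume "(\<forall>i<n. 0 \<le> lam i) \<and> (\<Sum>i<n. lam i) = 1 \<and> (\<forall>i<n. norm (f i) = 1 \<and> 0 < \<alpha> i \<and> \<alpha> i < 1)"
  then have lam: "\<forall>i<n. 0 \<le> lam i" "(\<Sum>i<n. lam i) = 1"
    and f: "\<And>i. i < n \<Longrightarrow> norm (f i) = 1" and \<alpha>: "\<And>i. i < n \<Longrightarrow> 0 < \<alpha> i"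
    by auto
  show "diameter (minkowski_comb n lam (\<lambda>i. slice (f i) (\<alpha> i))) = 2"
    using minkowski_comb_subset_cball[OF lam slice_subset_cball] proj_tensor_far_points[OF assms lam f \<alpha>]
    by (rule diameter_eq_2I)
qed

end
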